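(* Assume the setting below and let $M\geq 2$. There exists a constant $\widehat C=\widehat C(M)\geq 0$ such that for every function $f\in C^{2M}(\mathbb R^d;\mathbb R)$, $$\Big|\,\mathbb E\big[f(\widetilde X^{t_n,x,a}_{t_{n+1}})\big]-\mathbb E\big[f(\widehat X^{t_n,x,a}_{t_{n+1}})\big]\,\Big|\leq \widehat C\,\|D^{(2M)}f\|_\infty\,(1+|x|^{2M})\,h^M$$ for all $x\in\mathbb R^d$, $a\in A$, $h\geq0$ and $n=0,\ldots,N-1$.
   Context: Let $T>0$, $d,q\ge1$, $p=1$, let $B$ be a one-dimensional Brownian motion, let $A\subseteq\mathbb R^q$ be a compact subset of a separable metric space, and let $\mu:[0,T]\times\mathbb R^d\times A\to\mathbb R^d$, $\sigma:[0,T]\times\mathbb R^d\times A\to\mathbb R^{d\times 1}$ be continuous with $|\mu(t,x,a)-\mu(s,y,a)|+\|\sigma(t,x,a)-\sigma(s,y,a)\|\leq C_0(|x-y|+|t-s|^{1/2})$ for all $t,s,x,y,a$, for some $C_0\ge0$. Let $h=T/N$, $t_n=nh$. For $a\in A$ define the one-step Euler–Maruyama value $\widetilde X^{t_n,x,a}_{t_{n+1}}=x+\mu(t_n,x,a)h+\sigma(t_n,x,a)(B_{t_{n+1}}-B_{t_n})$, where $B_{t_{n+1}}-B_{t_n}\sim\sqrt h\,\mathcal N(0,1)$. Let $H_M(z)=(-1)^Me^{z^2}\frac{d^M}{dz^M}e^{-z^2}$ be the Hermite polynomial of order $M$, $z_1,\dots,z_M$ its zeros, $\omega_i=\frac{2^{M-1}M!\sqrt\pi}{M^2[H_{M-1}(z_i)]^2}$,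 and $\lambda_i=\omega_i/\sqrt\pi$, $\xi_i=\sqrt2 z_i$ (so $\lambda_i\ge0$, $\sum_i\lambda_i=1$, and $\sum_i\lambda_i f(\xi_i)=\int f(y)e^{-y^2/2}(2\pi)^{-1/2}dy$ for every polynomial $f$ of degree $\le 2M-1$). Let $\zeta$ be a random variable with $\mathbb P(\zeta=\xi_i)=\lambda_i$ and define $\widehat X^{t_n,x,a}_{t_{n+1}}=x+\mu(t_n,x,a)h+\sqrt h\,\sigma(t_n,x,a)\zeta$. For $k\in\mathbb N$, $\|D^{(k)}f\|_\infty:=\sup_{z\in\mathbb R^d,\ \beta\in\mathbb N^d,|\beta|=k}|\partial^\beta f(z)|$. *)

theory Defs
  imports "HOL-Analysis.Analysis" "HOL-Probability.Probability"
begin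

definition partial_dir :: "'d::finite \<Rightarrow> (real^'d \<Rightarrow> real) \<Rightarrow> real^'d \<Rightarrow> real" where
  "partial_dir i g x = deriv (\<lambda>t. g (x + t *\<^sub>R axis i 1)) 0"

text \<open>Iterated partial derivative along a list of coordinate indices
  (a multi-index beta with |beta| = k corresponds to lists of length k).\<close>
fun iter_partial :: "'d::finite list \<Rightarrow> (real^'d \<Rightarrow> real) \<Rightarrow> real^'d \<Rightarrow> real" where
  "iter_partial [] g = g"
| "iter_partial (i # is) g = partial_dir i (iter_partial is g)"

definition Ck :: "nat \<Rightarrow> (real^'d::finite \<Rightarrow> real) \<Rightarrow> bool" where
  "Ck k f \<longleftrightarrow>
     (\<forall>is. length is < k \<longrightarrow> (\<forall>i x. (\<lambda>t. iter_partial is f (x + t *\<^sub>R axis i 1)) differentiable (at 0)))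
   \<and> (\<forall>is. length is \<le> k \<longrightarrow> continuous_on UNIV (iter_partial is f))"

definition Dk_vals :: "nat \<Rightarrow> (real^'d::finite \<Rightarrow> real) \<Rightarrow> real set" where
  "Dk_vals k f = {\<bar>iter_partial is f z\<bar> | is z. length is = k}"

text \<open>\<open>\<parallel>D^(k) f\<parallel>_\<infinity>\<close> (meaningful when Dk_vals k f is bounded).\<close>
definition Dk_sup :: "nat \<Rightarrow> (real^'d::finite \<Rightarrow> real) \<Rightarrow> real" where
  "Dk_sup k f = Sup (Dk_vals k f)"

definition hermite :: "nat \<Rightarrow> real \<Rightarrow> real" where
  "hermite M z = (-1) ^ M * exp (z\<^sup>2) * (deriv ^^ M) (\<lambda>y. exp (- (y\<^sup>2))) z"

definition hermite_zeros :: "nat \<Rightarrow> real set" where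
  "hermite_zeros M = {z. hermite M z = 0}"

definition gh_omega :: "nat \<Rightarrow> real \<Rightarrow> real" where
  "gh_omega M z = 2 ^ (M - 1) * fact M * sqrt pi / ((real M)\<^sup>2 * (hermite (M - 1) z)\<^sup>2)"

definition gh_lambda :: "nat \<Rightarrow> real \<Rightarrow> real" where
  "gh_lambda M z = gh_omega M z / sqrt pi"

text \<open>E[f(X~)] for the one-step Euler--Maruyama value, with B_{t_{n+1}} - B_{t_n} = sqrt h * Y,
  Y standard normal.\<close>
definition EM_expect ::
  "(real \<Rightarrow> real^'d \<Rightarrow> 'a \<Rightarrow> real^'d) \<Rightarrow> (real \<Rightarrow> real^'d \<Rightarrow> 'a \<Rightarrow> real^'d)
   \<Rightarrow> (real^'d::finite \<Rightarrow> real) \<Rightarrow> real \<Rightarrow> real \<Rightarrow> real^'d \<Rightarrow> 'a \<Rightarrow> real" where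
  "EM_expect \<mu> \<sigma> f h t x a =
     (LINT y|lborel. std_normal_density y * f (x + h *\<^sub>R \<mu> t x a + (sqrt h * y) *\<^sub>R \<sigma> t x a))"

text \<open>E[f(X^)] where P(zeta = xi_i) = lambda_i, xi_i = sqrt 2 z_i, z_i the zeros of H_M.\<close>
definition GH_expect ::
  "nat \<Rightarrow> (real \<Rightarrow> real^'d \<Rightarrow> 'a \<Rightarrow> real^'d) \<Rightarrow> (real \<Rightarrow> real^'d \<Rightarrow> 'a \<Rightarrow> real^'d)
   \<Rightarrow> (real^'d::finite \<Rightarrow> real) \<Rightarrow> real \<Rightarrow> real \<Rightarrow> real^'d \<Rightarrow> 'a \<Rightarrow> real" where
  "GH_expect M \<mu> \<sigma> f h t x a =
     (\<Sum>z\<in>hermite_zeros M. gh_lambda M z *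
        f (x + h *\<^sub>R \<mu> t x a + (sqrt h * (sqrt 2 * z)) *\<^sub>R \<sigma> t x a))"

end

(*
  The Gauss--Hermite variable zeta with M nodes has the same moments as a standard normal Y up to
  order 2M - 1.  Taylor-expanding s |-> f (x + h mu + s sigma) to order 2M, the polynomial parts
  of E f (x + h mu + sqrt h Y sigma) and E f (x + h mu + sqrt h zeta sigma) therefore coincide,
  and each remainder is at most d^(2M) |sigma|^(2M) |D^(2M) f| |s|^(2M) / (2M)!; at s = sqrt h Y
  resp. sqrt h zeta this yields h^M times the moments of order 2M of Y and zeta.  Finally
  |sigma| grows at most linearly in x, by the Lipschitz bound and compactness of A.

  The moment matching is the classical exactness of Gaussian quadrature: the Hermite polynomials
  are orthogonal for p |-> int p(x) exp(-x^2) dx / sqrt pi; H_M has M simple real zeros, because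
  at the zeros of H_(n+1) one has H_(n+2) = -H_(n+1)', which alternates in sign; and reducing a
  polynomial of degree < 2M modulo H_M leaves one of degree < M, which is interpolated exactly
  at these zeros.
*)
theory Submission
  imports Defs "HOL-Computational_Algebra.Polynomial"
begin

section \<open>Hermite polynomials\<close>

fun hermite_poly :: "nat \<Rightarrow> real poly" where
  "hermite_poly 0 = 1"
| "hermite_poly (Suc n) = [:0, 2:] * hermite_poly n - pderiv (hermite_poly n)"

lemma coeff_hermite_poly: "coeff (hermite_poly n) n = 2 ^ n \<and> (\<forall>k>n. coeff (hermite_poly n) k = 0)"
proof (induction n)
  case (Suc n)
  have "[:0, 2:] * hermite_poly n = pCons 0 (smult 2 (hermite_poly n))" by simp
  with Suc show ?case by (auto simp: coeff_pderiv coeff_pCons split: nat.splits)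
qed simp

lemma degree_hermite_poly [simp]: "degree (hermite_poly n) = n"
  using coeff_hermite_poly[of n]
  by (metis le_degree leading_coeff_0_iff order.antisym power_not_zero zero_neq_numeral degree_le)

lemma coeff_hermite_poly_self [simp]: "coeff (hermite_poly n) n = 2 ^ n"
  using coeff_hermite_poly[of n] by simp

lemma hermite_poly_nonzero [simp]: "hermite_poly n \<noteq> 0"
  using coeff_hermite_poly_self[of n] by (metis coeff_0 power_not_zero zero_neq_numeral)

declare hermite_poly.simps(2) [simp del]

lemma pderiv_hermite_poly_Suc: "pderiv (hermite_poly (Suc n)) = smult (2 * (real n + 1)) (hermite_poly n)"
proof (induction n)
  case 0
  then show ?case by (simp add: hermite_poly.simps pderiv_pCons)
next
  case (Suc n)
  let ?H = "hermite_poly (Suc n)"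
  have "pderiv (hermite_poly (Suc (Suc n))) = smult 2 ?H + ([:0, 2:] * pderiv ?H - pderiv (pderiv ?H))"
    by (simp add: hermite_poly.simps(2)[of "Suc n"] pderiv_diff pderiv_mult pderiv_pCons pderiv_smult)
  also have "[:0, 2:] * pderiv ?H - pderiv (pderiv ?H) = smult (2 * (real n + 1)) ?H"
    by (simp only: Suc pderiv_smult mult_smult_right flip: smult_diff_right hermite_poly.simps(2))
  finally show ?case by (simp add: algebra_simps flip: smult_add_left)
qed

lemma poly_hermite_poly_Suc_Suc:
  "poly (hermite_poly (Suc (Suc n))) x
     = 2 * x * poly (hermite_poly (Suc n)) x - 2 * (real n + 1) * poly (hermite_poly n) x"
  by (simp add: hermite_poly.simps(2)[of "Suc n"] pderiv_hermite_poly_Suc)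

lemma poly_hermite_poly_minus: "poly (hermite_poly n) (- x) = (-1) ^ n * poly (hermite_poly n) x"
proof -
  have "poly (hermite_poly n) (- x) = (-1) ^ n * poly (hermite_poly n) x \<and>
        poly (hermite_poly (Suc n)) (- x) = (-1) ^ Suc n * poly (hermite_poly (Suc n)) x"
  proof (induction n)
    case 0
    then show ?case by (simp add: hermite_poly.simps(2))
  next
    case (Suc n)
    then show ?case by (simp add: poly_hermite_poly_Suc_Suc[of n] algebra_simps)
  qed
  then show ?thesis ..
qed

lemma hermite_eq_poly_hermite_poly: "hermite n = poly (hermite_poly n)"
proof -
  have "(deriv ^^ n) (\<lambda>y. exp (- y\<^sup>2)) = (\<lambda>y. (-1) ^ n * poly (hermite_poly n) y * exp (- y\<^sup>2))"
  proof (induction n)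
    case (Suc n)
    have "((\<lambda>y. (-1) ^ n * poly (hermite_poly n) y * exp (- y\<^sup>2)) has_real_derivative
           (-1) ^ Suc n * poly (hermite_poly (Suc n)) y * exp (- y\<^sup>2)) (at y)" for y
      by (auto intro!: derivative_eq_intros simp: hermite_poly.simps(2) algebra_simps power2_eq_square)
    then show ?case
      by (simp add: Suc DERIV_imp_deriv fun_eq_iff del: power_Suc)
  qed simp
  then show ?thesis
    by (auto simp: hermite_def exp_minus field_simps fun_eq_iff simp flip: power_mult_distrib)
qed

lemma mem_hermite_zeros [simp]: "z \<in> hermite_zeros n \<longleftrightarrow> poly (hermite_poly n) z = 0"
  by (simp add: hermite_zeros_def hermite_eq_poly_hermite_poly)

lemma finite_hermite_zeros [simp]: "finite (hermite_zeros n)"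
  using poly_roots_finite[of "hermite_poly n"] by (simp add: hermite_zeros_def hermite_eq_poly_hermite_poly)

lemma card_hermite_zeros_le: "card (hermite_zeros n) \<le> n"
  using card_poly_roots_bound[of "hermite_poly n"] by (simp add: hermite_zeros_def hermite_eq_poly_hermite_poly)

lemma minus_mem_hermite_zeros: "z \<in> hermite_zeros n \<Longrightarrow> - z \<in> hermite_zeros n"
  by (simp add: poly_hermite_poly_minus)

lemma hermite_poly_quadratic_form_pos:
  "0 < 2 * (real n + 1) * (poly (hermite_poly n) x)\<^sup>2
         - 2 * x * poly (hermite_poly n) x * poly (hermite_poly (Suc n)) x + (poly (hermite_poly (Suc n)) x)\<^sup>2"
proof (induction n)
  case 0
  then show ?case by (simp add: hermite_poly.simps(2) power2_eq_square)
next
  case (Suc n)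
  let ?A = "poly (hermite_poly n) x" and ?B = "poly (hermite_poly (Suc n)) x"
    and ?C = "poly (hermite_poly (Suc (Suc n))) x"
  have "2 * (k + 2) * B\<^sup>2 - 2 * x * B * C + C\<^sup>2
        = 2 * (k + 1) * (2 * (k + 1) * A\<^sup>2 - 2 * x * A * B + B\<^sup>2) + 2 * B\<^sup>2"
    if "C = 2 * x * B - 2 * (k + 1) * A" for A B C k :: real
    unfolding that by (simp add: power2_eq_square algebra_simps)
  from this[OF poly_hermite_poly_Suc_Suc]
  have "2 * (real (Suc n) + 1) * ?B\<^sup>2 - 2 * x * ?B * ?C + ?C\<^sup>2
        = 2 * (real n + 1) * (2 * (real n + 1) * ?A\<^sup>2 - 2 * x * ?A * ?B + ?B\<^sup>2) + 2 * ?B\<^sup>2"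
    by (simp add: add.commute)
  moreover have "0 < 2 * (real n + 1) * (2 * (real n + 1) * ?A\<^sup>2 - 2 * x * ?A * ?B + ?B\<^sup>2)"
    using Suc by simp
  ultimately show ?case by (smt (verit) zero_le_power2)
qed

lemma hermite_poly_no_common_zero:
  "poly (hermite_poly (Suc n)) x = 0 \<Longrightarrow> poly (hermite_poly n) x \<noteq> 0"
  using hermite_poly_quadratic_form_pos[of n x] by auto

section \<open>The real zeros of the Hermite polynomials\<close>

definition alternates_on :: "real set \<Rightarrow> (real \<Rightarrow> real) \<Rightarrow> bool" where
  "alternates_on X g \<longleftrightarrow> (\<forall>x\<in>X. \<forall>y\<in>X. x < y \<and> {x<..<y} \<inter> X = {} \<longrightarrow> g x * g y < 0)"

lemma alternates_on_insert_max:
  assumes "alternates_on X g" "finite X" "X \<noteq> {}" "Max X < b" "g (Max X) * g b < 0"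
  shows "alternates_on (insert b X) g"
  unfolding alternates_on_def
proof (intro ballI impI)
  fix x y assume x: "x \<in> insert b X" and y: "y \<in> insert b X"
    and xy: "x < y \<and> {x<..<y} \<inter> insert b X = {}"
  have le_Max: "z \<le> Max X" if "z \<in> X" for z using that assms(2) by simp
  consider "x \<in> X" "y \<in> X" | "x \<in> X" "y = b" | "x = b"
    using x y by blast
  then show "g x * g y < 0"
  proof cases
    case 1
    then show ?thesis using assms(1) xy unfolding alternates_on_def by blast
  next
    case 2
    then have "Max X \<notin> {x<..<y}"
      using xy Max_in[OF assms(2,3)] by blast
    then have "x = Max X"
      using le_Max[OF \<open>x \<in> X\<close>] assms(4) \<open>y = b\<close> by auto
    then show ?thesis using 2 assms(5) by simp
  next
    case 3
    with y xy have "y \<in> X" by auto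
    then show ?thesis using 3 xy le_Max assms(4) by fastforce
  qed
qed

lemma alternates_on_insert_min:
  assumes "alternates_on X g" "finite X" "X \<noteq> {}" "a < Min X" "g a * g (Min X) < 0"
  shows "alternates_on (insert a X) g"
  unfolding alternates_on_def
proof (intro ballI impI)
  fix x y assume x: "x \<in> insert a X" and y: "y \<in> insert a X"
    and xy: "x < y \<and> {x<..<y} \<inter> insert a X = {}"
  have Min_le: "Min X \<le> z" if "z \<in> X" for z using that assms(2) by simp
  consider "x \<in> X" "y \<in> X" | "x = a" "y \<in> X" | "y = a"
    using x y by blast
  then show "g x * g y < 0"
  proof cases
    case 1
    then show ?thesis using assms(1) xy unfolding alternates_on_def by blast
  next
    case 2
    then have "Min X \<notin> {x<..<y}"
      using xy Min_in[OF assms(2,3)] by blast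
    then have "y = Min X"
      using Min_le[OF \<open>y \<in> X\<close>] assms(4) \<open>x = a\<close> by auto
    then show ?thesis using 2 assms(5) by simp
  next
    case 3
    then show ?thesis using x xy Min_le assms(4) by fastforce
  qed
qed

lemma alternates_on_remove_max:
  assumes "alternates_on (insert b X) g" "\<And>x. x \<in> X \<Longrightarrow> x \<le> b"
  shows "alternates_on X g"
  unfolding alternates_on_def
proof (intro ballI impI)
  fix x y assume "x \<in> X" "y \<in> X" and xy: "x < y \<and> {x<..<y} \<inter> X = {}"
  then have "{x<..<y} \<inter> insert b X = {}"
    using assms(2) by fastforce
  then show "g x * g y < 0"
    using assms(1) \<open>x \<in> X\<close> \<open>y \<in> X\<close> xy unfolding alternates_on_def by blast
qed

lemma card_roots_ge_alternates_on:
  fixes p :: "real poly"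
  assumes "p \<noteq> 0" "finite X" "X \<noteq> {}" "alternates_on X (poly p)"
  shows "card X - 1 \<le> card {r. poly p r = 0 \<and> r < Max X}"
  using assms(2-4)
proof (induction X rule: finite_ranking_induct[where f = "\<lambda>x. x"])
  case (insert b X)
  consider "X = {}" | "b \<in> X" | "X \<noteq> {}" "b \<notin> X" by blast
  then show ?case
  proof cases
    case 2
    then show ?thesis using insert by (simp add: insert_absorb; blast)
  next
    case 3
    define m where "m = Max X"
    have m: "m \<in> X" "m < b"
      using insert.hyps 3 by (auto simp: m_def order_le_less)
    have "Max X \<le> b"
      using insert.hyps 3 by simp
    then have Max_insert: "Max (insert b X) = b"
      using insert.hyps 3 by simp
    have "{m<..<b} \<inter> insert b X = {}"
      using Max_ge[OF insert.hyps(1)] by (fastforce simp: m_def)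
    then have "poly p m * poly p b < 0"
      using insert.prems m unfolding alternates_on_def by blast
    then obtain c where c: "m < c" "c < b" "poly p c = 0"
      using poly_IVT[OF \<open>m < b\<close>] by blast
    have "alternates_on X (poly p)"
      using alternates_on_remove_max insert.prems insert.hyps(2) by blast
    then have IH: "card X - 1 \<le> card {r. poly p r = 0 \<and> r < m}"
      using insert.IH 3 by (simp add: m_def)
    have fin: "finite {r. poly p r = 0 \<and> r < m}"
      using poly_roots_finite[OF assms(1)] by (rule rev_finite_subset) auto
    have "finite {r. poly p r = 0 \<and> r < b}"
      using poly_roots_finite[OF assms(1)] by (rule rev_finite_subset) auto
    moreover have "insert c {r. poly p r = 0 \<and> r < m} \<subseteq> {r. poly p r = 0 \<and> r < b}"
      using c m by auto
    ultimately have "card (insert c {r. poly p r = 0 \<and> r < m}) \<le> card {r. poly p r = 0 \<and> r < b}"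
      by (rule card_mono)
    then show ?thesis
      using IH fin c(1) insert.hyps(1) 3 Max_insert by auto
  qed simp
qed simp

lemma pderiv_not_pos_at_adjacent_roots:
  fixes p :: "real poly"
  assumes "r1 < r2" "poly p r1 = 0" "poly p r2 = 0" and no_root: "\<forall>z. r1 < z \<and> z < r2 \<longrightarrow> poly p z \<noteq> 0"
  shows "\<not> (poly (pderiv p) r1 > 0 \<and> poly (pderiv p) r2 > 0)"
proof
  assume pos: "poly (pderiv p) r1 > 0 \<and> poly (pderiv p) r2 > 0"
  obtain d1 where d1: "d1 > 0" "\<And>h. 0 < h \<Longrightarrow> h < d1 \<Longrightarrow> poly p r1 < poly p (r1 + h)"
    using DERIV_pos_inc_right[OF poly_DERIV] pos by blast
  obtain d2 where d2: "d2 > 0" "\<And>h. 0 < h \<Longrightarrow> h < d2 \<Longrightarrow> poly p (r2 - h) < poly p r2"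
    using DERIV_pos_inc_left[OF poly_DERIV] pos by blast
  define h where "h = Min {d1, d2, (r2 - r1) / 2} / 2"
  have h: "0 < h" "h < d1" "h < d2" "r1 + h < r2 - h"
    using d1(1) d2(1) assms(1) by (auto simp: h_def min_def field_simps)
  have "poly p (r1 + h) > 0" "poly p (r2 - h) < 0"
    using d1(2) d2(2) h assms(2,3) by auto
  then obtain c where "r1 + h < c" "c < r2 - h" "poly p c = 0"
    using poly_IVT_neg[OF h(4)] by blast
  then show False using no_root h(1) by auto
qed

lemma pderiv_opposite_signs_at_adjacent_roots:
  fixes p :: "real poly"
  assumes "r1 < r2" "poly p r1 = 0" "poly p r2 = 0" "\<forall>z. r1 < z \<and> z < r2 \<longrightarrow> poly p z \<noteq> 0"
    and "poly (pderiv p) r1 \<noteq> 0" "poly (pderiv p) r2 \<noteq> 0"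
  shows "poly (pderiv p) r1 * poly (pderiv p) r2 < 0"
proof -
  have "\<not> (poly (pderiv q) r1 > 0 \<and> poly (pderiv q) r2 > 0)" if "q = p \<or> q = - p" for q
    by (rule pderiv_not_pos_at_adjacent_roots) (use assms that in auto)
  from this[of p] this[of "- p"] assms(5,6) show ?thesis
    by (auto simp: pderiv_minus mult_less_0_iff)
qed

lemma pderiv_pos_at_largest_root:
  fixes p :: "real poly"
  assumes "lead_coeff p > 0" "poly p r = 0" "\<forall>y>r. poly p y \<noteq> 0" "poly (pderiv p) r \<noteq> 0"
  shows "poly (pderiv p) r > 0"
proof (rule ccontr)
  assume "\<not> ?thesis"
  then have "poly (pderiv p) r < 0" using assms(4) by simp
  then obtain d where d: "d > 0" "\<And>h. 0 < h \<Longrightarrow> h < d \<Longrightarrow> poly p (r + h) < poly p r"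
    using DERIV_neg_dec_right[OF poly_DERIV] by blast
  obtain N where N: "\<And>x. N \<le> x \<Longrightarrow> lead_coeff p \<le> poly p x"
    using poly_pinfty_gt_lc[OF assms(1)] by blast
  define a where "a = r + d / 2"
  define b where "b = max N (a + 1)"
  have "a < b" "poly p a < 0" "poly p b > 0"
    using d assms(1,2) N[of b] by (auto simp: a_def b_def)
  then obtain c where "a < c" "poly p c = 0"
    using poly_IVT_pos by blast
  then show False using assms(3) d(1) by (auto simp: a_def)
qed

lemma poly_hermite_poly_Suc_at_zero:
  "z \<in> hermite_zeros n \<Longrightarrow> poly (hermite_poly (Suc n)) z = - poly (pderiv (hermite_poly n)) z"
  by (simp add: hermite_poly.simps(2))

lemma poly_pderiv_hermite_poly_at_zero:
  "z \<in> hermite_zeros (Suc n) \<Longrightarrow> poly (pderiv (hermite_poly (Suc n))) z \<noteq> 0"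
  using hermite_poly_no_common_zero[of n z] by (simp add: pderiv_hermite_poly_Suc)

lemma alternates_on_hermite_zeros:
  "alternates_on (hermite_zeros (Suc n)) (poly (hermite_poly (Suc (Suc n))))"
  unfolding alternates_on_def
proof (intro ballI impI)
  fix x y assume x: "x \<in> hermite_zeros (Suc n)" and y: "y \<in> hermite_zeros (Suc n)"
    and "x < y \<and> {x<..<y} \<inter> hermite_zeros (Suc n) = {}"
  then have "poly (pderiv (hermite_poly (Suc n))) x * poly (pderiv (hermite_poly (Suc n))) y < 0"
    by (intro pderiv_opposite_signs_at_adjacent_roots poly_pderiv_hermite_poly_at_zero) auto
  then show "poly (hermite_poly (Suc (Suc n))) x * poly (hermite_poly (Suc (Suc n))) y < 0"
    using poly_hermite_poly_Suc_at_zero[OF x] poly_hermite_poly_Suc_at_zero[OF y] by simp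
qed

lemma poly_hermite_poly_Suc_Suc_at_Max_zeros:
  assumes "hermite_zeros (Suc n) \<noteq> {}"
  shows "poly (hermite_poly (Suc (Suc n))) (Max (hermite_zeros (Suc n))) < 0"
proof -
  let ?r = "Max (hermite_zeros (Suc n))"
  have r: "?r \<in> hermite_zeros (Suc n)" "\<And>y. y \<in> hermite_zeros (Suc n) \<Longrightarrow> y \<le> ?r"
    using Max_in[OF finite_hermite_zeros assms] Max_ge[OF finite_hermite_zeros] by blast+
  have "poly (pderiv (hermite_poly (Suc n))) ?r > 0"
  proof (rule pderiv_pos_at_largest_root)
    show "poly (hermite_poly (Suc n)) ?r = 0"
      using r(1) by simp
    show "\<forall>y>?r. poly (hermite_poly (Suc n)) y \<noteq> 0"
      using r(2) by (auto simp: not_le[symmetric])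
  qed (simp_all add: poly_pderiv_hermite_poly_at_zero[OF r(1)])
  then show ?thesis
    using poly_hermite_poly_Suc_at_zero[OF r(1)] by simp
qed

text \<open>The zeros of \<open>H\<^sub>n\<^sub>+\<^sub>1\<close>, together with two points \<open>\<plusminus>B\<close> far out, are \<open>n + 3\<close> points
  at which \<open>H\<^sub>n\<^sub>+\<^sub>2\<close> alternates in sign.\<close>
lemma card_hermite_zeros_Suc_Suc:
  assumes card_R: "card (hermite_zeros (Suc n)) = Suc n"
  shows "card (hermite_zeros (Suc (Suc n))) = Suc (Suc n)"
proof -
  define R where "R = hermite_zeros (Suc n)"
  let ?G = "hermite_poly (Suc (Suc n))"
  define rM where "rM = Max R"
  have R: "finite R" "R \<noteq> {}" "card R = Suc n"
    using card_R by (auto simp: R_def)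
  have rM: "rM \<in> R" "\<And>r. r \<in> R \<Longrightarrow> r \<le> rM" "poly ?G rM < 0"
    using Max_in[OF R(1,2)] Max_ge[OF R(1)] poly_hermite_poly_Suc_Suc_at_Max_zeros[of n] R(2)
    by (simp_all add: rM_def R_def)
  have Min_R: "Min R = - rM"
    using R rM minus_mem_hermite_zeros[of _ "Suc n"]
    by (intro antisym Min_le Min.boundedI) (force simp: R_def)+
  obtain N where N: "\<And>x. N \<le> x \<Longrightarrow> lead_coeff ?G \<le> poly ?G x"
    using poly_pinfty_gt_lc[of ?G] by auto
  define B where "B = max N (\<bar>rM\<bar> + 1)"
  have G_B: "poly ?G B > 0"
    using N[of B] by (simp add: B_def) (smt (verit) zero_less_power)
  have B: "rM < B" "- rM < B" "- B < - rM" by (auto simp: B_def)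
  have "alternates_on (insert B R) (poly ?G)"
    using R(1,2) alternates_on_hermite_zeros[of n] B rM(3) G_B
    by (intro alternates_on_insert_max) (simp_all add: rM_def R_def mult_neg_pos)
  moreover have "Min (insert B R) = - rM"
    using R(1,2) Min_R B by (simp add: min_def)
  moreover have "poly ?G (- B) * poly ?G (- rM) = poly ?G B * poly ?G rM"
    by (simp add: poly_hermite_poly_minus algebra_simps flip: power_add mult_2)
  ultimately have alt: "alternates_on (insert (- B) (insert B R)) (poly ?G)"
    using R(1) B rM(3) G_B alternates_on_insert_min[of "insert B R" "poly ?G" "- B"]
    by (auto simp: mult_pos_neg)
  have "B \<notin> R" "- B \<notin> R" "- B \<noteq> B"
    using rM(2) B Min_R R(1) Min_le[of R] by fastforce+
  then have "card (insert (- B) (insert B R)) = Suc (Suc (Suc n))"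
    using R by simp
  then have "Suc (Suc n) \<le> card {r. poly ?G r = 0 \<and> r < Max (insert (- B) (insert B R))}"
    using card_roots_ge_alternates_on[OF hermite_poly_nonzero _ _ alt] R(1) by simp
  also have "\<dots> \<le> card (hermite_zeros (Suc (Suc n)))"
    by (intro card_mono finite_hermite_zeros) auto
  finally show ?thesis
    using card_hermite_zeros_le[of "Suc (Suc n)"] by simp
qed

lemma card_hermite_zeros_Suc: "card (hermite_zeros (Suc n)) = Suc n"
proof (induction n)
  case 0
  have "hermite_zeros (Suc 0) = {0}"
    by (auto simp: hermite_poly.simps(2))
  then show ?case by simp
qed (rule card_hermite_zeros_Suc_Suc)

section \<open>Exactness of Gauss--Hermite quadrature\<close>

text \<open>The moments of the weight \<open>exp (- x\<^sup>2) / sqrt pi\<close>, and the linear functional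
  \<open>p \<mapsto> \<integral> p(x) exp (- x\<^sup>2) dx / sqrt pi\<close> on polynomials defined through them.\<close>

fun gauss_moment :: "nat \<Rightarrow> real" where
  "gauss_moment 0 = 1"
| "gauss_moment (Suc 0) = 0"
| "gauss_moment (Suc (Suc k)) = (real k + 1) / 2 * gauss_moment k"

definition gauss_functional :: "real poly \<Rightarrow> real" where
  "gauss_functional p = (\<Sum>i\<le>degree p. coeff p i * gauss_moment i)"

lemma gauss_functional_eq_sum:
  "degree p \<le> n \<Longrightarrow> gauss_functional p = (\<Sum>i\<le>n. coeff p i * gauss_moment i)"
  unfolding gauss_functional_def by (rule sum.mono_neutral_left) (auto simp: coeff_eq_0)

lemma gauss_functional_add: "gauss_functional (p + q) = gauss_functional p + gauss_functional q"
proof -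
  let ?n = "max (degree p) (degree q)"
  have "gauss_functional (p + q) = (\<Sum>i\<le>?n. coeff (p + q) i * gauss_moment i)"
    by (rule gauss_functional_eq_sum) (simp add: degree_add_le)
  then show ?thesis
    using gauss_functional_eq_sum[of p ?n] gauss_functional_eq_sum[of q ?n]
    by (simp add: algebra_simps sum.distrib)
qed

lemma gauss_functional_smult: "gauss_functional (smult c p) = c * gauss_functional p"
  using gauss_functional_eq_sum[of "smult c p" "degree p"]
  by (simp add: degree_smult_le gauss_functional_def sum_distrib_left algebra_simps)

lemma gauss_functional_diff: "gauss_functional (p - q) = gauss_functional p - gauss_functional q"
  using gauss_functional_add[of p "- q"] gauss_functional_smult[of "- 1" q] by simp

lemma gauss_functional_0 [simp]: "gauss_functional 0 = 0"
  by (simp add: gauss_functional_def)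

lemma gauss_functional_sum: "gauss_functional (\<Sum>x\<in>S. f x) = (\<Sum>x\<in>S. gauss_functional (f x))"
  by (induction S rule: infinite_finite_induct) (auto simp: gauss_functional_add)

lemma gauss_functional_monom: "gauss_functional (monom 1 k) = gauss_moment k"
proof -
  have "gauss_functional (monom 1 k) = (\<Sum>i\<le>k. if k = i then gauss_moment i else 0)"
    unfolding gauss_functional_def degree_monom_eq[OF one_neq_zero] by (rule sum.cong) auto
  then show ?thesis by simp
qed

text \<open>Integration by parts against \<open>exp (- x\<^sup>2)\<close>.\<close>
lemma gauss_functional_pderiv: "gauss_functional (pderiv p) = gauss_functional ([:0, 2:] * p)"
proof -
  define n where "n = degree p"
  have "[:0, 2:] * p = pCons 0 (smult 2 p)" by simp
  then have "gauss_functional ([:0, 2:] * p) = (\<Sum>i\<le>Suc n. coeff (pCons 0 (smult 2 p)) i * gauss_moment i)"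
    by (metis gauss_functional_eq_sum degree_pCons_le degree_smult_le le_trans n_def Suc_le_mono)
  also have "\<dots> = (\<Sum>i\<le>n. coeff p i * (2 * gauss_moment (Suc i)))"
    by (subst sum.atMost_Suc_shift) (simp add: mult_ac)
  also have "\<dots> = (\<Sum>i\<le>Suc n. coeff p i * (real i * gauss_moment (i - 1)))"
  proof -
    have "2 * gauss_moment (Suc i) = real i * gauss_moment (i - 1)" for i
      by (cases i) auto
    moreover have "coeff p (Suc n) = 0"
      by (simp add: n_def coeff_eq_0)
    ultimately show ?thesis by simp
  qed
  also have "\<dots> = (\<Sum>i\<le>n. coeff p (Suc i) * (real (Suc i) * gauss_moment i))"
    by (subst sum.atMost_Suc_shift) simp
  also have "\<dots> = gauss_functional (pderiv p)"
    using gauss_functional_eq_sum[of "pderiv p" n] by (simp add: n_def degree_pderiv coeff_pderiv algebra_simps)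
  finally show ?thesis ..
qed

lemma gauss_functional_hermite_poly_mult:
  "gauss_functional (hermite_poly n * q) = gauss_functional ((pderiv ^^ n) q)"
proof (induction n arbitrary: q)
  case (Suc n)
  have "hermite_poly (Suc n) * q = [:0, 2:] * (hermite_poly n * q) - pderiv (hermite_poly n) * q"
    by (simp add: hermite_poly.simps(2) algebra_simps)
  then have "gauss_functional (hermite_poly (Suc n) * q)
      = gauss_functional (pderiv (hermite_poly n * q)) - gauss_functional (pderiv (hermite_poly n) * q)"
    by (simp add: gauss_functional_diff gauss_functional_pderiv mult.assoc)
  also have "\<dots> = gauss_functional (hermite_poly n * pderiv q)"
    by (simp add: pderiv_mult gauss_functional_add mult.commute)
  finally show ?case
    using Suc.IH[of "pderiv q"] by (simp add: funpow_Suc_right del: funpow.simps)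
qed simp

lemma higher_pderiv_eq_0: "degree q < n \<Longrightarrow> (pderiv ^^ n) q = 0"
  by (intro poly_eqI) (simp add: coeff_higher_pderiv coeff_eq_0)

lemma higher_pderiv_degree: "(pderiv ^^ degree q) q = [:fact (degree q) * lead_coeff q:]"
  for q :: "real poly"
  by (intro poly_eqI) (auto simp: coeff_higher_pderiv coeff_pCons coeff_eq_0 pochhammer_fact split: nat.split)

lemma gauss_functional_hermite_poly_orthogonal:
  "degree q < n \<Longrightarrow> gauss_functional (hermite_poly n * q) = 0"
  by (simp add: gauss_functional_hermite_poly_mult higher_pderiv_eq_0)

lemma gauss_functional_hermite_poly_mult_degree:
  "degree q = n \<Longrightarrow> gauss_functional (hermite_poly n * q) = fact n * lead_coeff q"
  using higher_pderiv_degree[of q]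
  by (simp only: gauss_functional_hermite_poly_mult) (simp add: gauss_functional_def)

lemma gh_lambda_Suc:
  "gh_lambda (Suc m) z = 2 ^ m * fact m / ((real m + 1) * (poly (hermite_poly m) z)\<^sup>2)"
proof -
  have "gh_lambda (Suc m) z = 2 ^ m * fact m * ((real m + 1) * sqrt pi)
      / ((real m + 1) * (poly (hermite_poly m) z)\<^sup>2 * ((real m + 1) * sqrt pi))"
    by (simp add: gh_lambda_def gh_omega_def hermite_eq_poly_hermite_poly power2_eq_square algebra_simps)
  also have "\<dots> = 2 ^ m * fact m / ((real m + 1) * (poly (hermite_poly m) z)\<^sup>2)"
    by (rule mult_divide_mult_cancel_right) simp
  finally show ?thesis .
qed

lemma degree_synthetic_div_hermite_poly: "degree (synthetic_div (hermite_poly (Suc m)) z) = m"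
  by (simp add: degree_synthetic_div)

context
  fixes m :: nat and z :: real
  assumes z: "z \<in> hermite_zeros (Suc m)"
begin

lemma hermite_poly_eq_linear_mult_synthetic_div:
  "hermite_poly (Suc m) = [:- z, 1:] * synthetic_div (hermite_poly (Suc m)) z"
  using synthetic_div_correct'[of z "hermite_poly (Suc m)"] z by simp

lemma lead_coeff_synthetic_div_hermite_poly:
  "lead_coeff (synthetic_div (hermite_poly (Suc m)) z) = 2 ^ Suc m"
proof -
  have "lead_coeff ([:- z, 1:] * synthetic_div (hermite_poly (Suc m)) z)
      = lead_coeff (synthetic_div (hermite_poly (Suc m)) z)"
    by (subst lead_coeff_mult) simp
  then show ?thesis
    by (simp only: flip: hermite_poly_eq_linear_mult_synthetic_div) simp
qed

lemma poly_synthetic_div_hermite_poly_self: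
  "poly (synthetic_div (hermite_poly (Suc m)) z) z = 2 * (real m + 1) * poly (hermite_poly m) z"
proof -
  let ?Q = "synthetic_div (hermite_poly (Suc m)) z"
  have "pderiv (hermite_poly (Suc m)) = [:- z, 1:] * pderiv ?Q + ?Q * pderiv [:- z, 1:]"
    using hermite_poly_eq_linear_mult_synthetic_div pderiv_mult by metis
  then have "poly (pderiv (hermite_poly (Suc m))) z = poly ?Q z"
    by (simp add: pderiv_pCons)
  then show ?thesis by (simp add: pderiv_hermite_poly_Suc)
qed

lemma poly_synthetic_div_hermite_poly_other:
  "z' \<in> hermite_zeros (Suc m) \<Longrightarrow> z' \<noteq> z \<Longrightarrow> poly (synthetic_div (hermite_poly (Suc m)) z) z' = 0"
  using arg_cong[OF hermite_poly_eq_linear_mult_synthetic_div, of "\<lambda>p. poly p z'"] by simp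

lemma gauss_functional_synthetic_div_hermite_poly:
  "gauss_functional (synthetic_div (hermite_poly (Suc m)) z) * poly (hermite_poly m) z = 2 ^ Suc m * fact m"
proof -
  let ?Q = "synthetic_div (hermite_poly (Suc m)) z" and ?D = "synthetic_div (hermite_poly m) z"
  have "hermite_poly m * ?Q = ([:- z, 1:] * ?D + [:poly (hermite_poly m) z:]) * ?Q"
    by (simp only: synthetic_div_correct')
  also have "\<dots> = hermite_poly (Suc m) * ?D + smult (poly (hermite_poly m) z) ?Q"
    by (subst (2) hermite_poly_eq_linear_mult_synthetic_div) (simp add: algebra_simps)
  finally have "gauss_functional (hermite_poly m * ?Q)
      = gauss_functional (hermite_poly (Suc m) * ?D) + poly (hermite_poly m) z * gauss_functional ?Q"
    by (simp add: gauss_functional_add gauss_functional_smult)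
  moreover have "gauss_functional (hermite_poly (Suc m) * ?D) = 0"
    by (rule gauss_functional_hermite_poly_orthogonal) (simp add: degree_synthetic_div)
  moreover have "gauss_functional (hermite_poly m * ?Q) = fact m * 2 ^ Suc m"
    using gauss_functional_hermite_poly_mult_degree[OF degree_synthetic_div_hermite_poly]
      lead_coeff_synthetic_div_hermite_poly by simp
  ultimately show ?thesis by (simp add: mult.commute)
qed

end

lemma gauss_functional_eq_gauss_hermite_low:
  assumes "degree r \<le> m"
  shows "gauss_functional r = (\<Sum>z\<in>hermite_zeros (Suc m). gh_lambda (Suc m) z * poly r z)"
proof -
  let ?Z = "hermite_zeros (Suc m)" and ?Q = "\<lambda>z. synthetic_div (hermite_poly (Suc m)) z"
  have Q_self_nz: "poly (?Q z) z \<noteq> 0" if "z \<in> ?Z" for z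
    using that hermite_poly_no_common_zero[of m z] by (simp add: poly_synthetic_div_hermite_poly_self)
  have interpolation: "r = (\<Sum>z\<in>?Z. smult (poly r z / poly (?Q z) z) (?Q z))"
  proof (rule poly_eqI_degree[where A = ?Z])
    fix z' assume z': "z' \<in> ?Z"
    have "(\<Sum>z\<in>?Z. poly r z / poly (?Q z) z * poly (?Q z) z') = poly r z' / poly (?Q z') z' * poly (?Q z') z'"
      using z' by (subst sum.mono_neutral_right[of _ "{z'}"]) (auto simp: poly_synthetic_div_hermite_poly_other)
    then show "poly r z' = poly (\<Sum>z\<in>?Z. smult (poly r z / poly (?Q z) z) (?Q z)) z'"
      using Q_self_nz[OF z'] by (simp add: poly_sum)
  next
    have "degree (\<Sum>z\<in>?Z. smult (poly r z / poly (?Q z) z) (?Q z)) \<le> m"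
      by (intro degree_sum_le finite_hermite_zeros order.trans[OF degree_smult_le]) (simp add: degree_synthetic_div)
    then show "degree (\<Sum>z\<in>?Z. smult (poly r z / poly (?Q z) z) (?Q z)) < card ?Z"
      by (simp add: card_hermite_zeros_Suc)
  qed (use assms in \<open>simp add: card_hermite_zeros_Suc\<close>)
  have "gauss_functional r = (\<Sum>z\<in>?Z. poly r z / poly (?Q z) z * gauss_functional (?Q z))"
    by (subst interpolation) (simp add: gauss_functional_sum gauss_functional_smult)
  also have "\<dots> = (\<Sum>z\<in>?Z. gh_lambda (Suc m) z * poly r z)"
  proof (rule sum.cong)
    fix z assume z: "z \<in> ?Z"
    let ?H = "poly (hermite_poly m) z"
    have "?H \<noteq> 0"
      using z hermite_poly_no_common_zero by simp
    then have "gauss_functional (?Q z) = 2 ^ Suc m * fact m / ?H"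
      using gauss_functional_synthetic_div_hermite_poly[OF z] by (simp add: eq_divide_eq)
    moreover have "a / (2 * k * H) * (2 ^ Suc m * f / H) = 2 ^ m * f / (k * H\<^sup>2) * a" for a k f H :: real
    proof -
      have "a / (2 * k * H) * (2 ^ Suc m * f / H) = 2 * (2 ^ m * f * a) / (2 * (k * H\<^sup>2))"
        by (simp add: power2_eq_square mult_ac)
      also have "\<dots> = 2 ^ m * f / (k * H\<^sup>2) * a"
        by (subst mult_divide_mult_cancel_left) simp_all
      finally show ?thesis .
    qed
    ultimately show "poly r z / poly (?Q z) z * gauss_functional (?Q z) = gh_lambda (Suc m) z * poly r z"
      by (simp only: poly_synthetic_div_hermite_poly_self[OF z] gh_lambda_Suc)
  qed simp
  finally show ?thesis .
qed

lemma gauss_functional_eq_gauss_hermite: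
  assumes "degree p < 2 * Suc m"
  shows "gauss_functional p = (\<Sum>z\<in>hermite_zeros (Suc m). gh_lambda (Suc m) z * poly p z)"
proof -
  let ?H = "hermite_poly (Suc m)"
  have p: "p = ?H * (p div ?H) + p mod ?H" by simp
  have deg_mod: "degree (p mod ?H) \<le> m"
    using degree_mod_less[OF hermite_poly_nonzero, of p "Suc m"] by auto
  have deg_div: "degree (p div ?H) < Suc m"
  proof (cases "p div ?H = 0")
    case False
    then have "degree (?H * (p div ?H)) = Suc m + degree (p div ?H)"
      by (simp add: degree_mult_eq)
    then have "degree p = Suc m + degree (p div ?H)"
      using degree_add_eq_left[of "p mod ?H" "?H * (p div ?H)"] deg_mod by (simp add: p[symmetric])
    then show ?thesis using assms by simp
  qed simp
  have "gauss_functional p = gauss_functional (?H * (p div ?H)) + gauss_functional (p mod ?H)"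
    by (metis gauss_functional_add p)
  also have "\<dots> = (\<Sum>z\<in>hermite_zeros (Suc m). gh_lambda (Suc m) z * poly (p mod ?H) z)"
    using deg_mod deg_div
    by (simp add: gauss_functional_hermite_poly_orthogonal gauss_functional_eq_gauss_hermite_low)
  also have "\<dots> = (\<Sum>z\<in>hermite_zeros (Suc m). gh_lambda (Suc m) z * poly p z)"
  proof (intro sum.cong refl)
    fix z assume "z \<in> hermite_zeros (Suc m)"
    moreover have "poly p z = poly ?H z * poly (p div ?H) z + poly (p mod ?H) z"
      by (metis p poly_add poly_mult)
    ultimately show "gh_lambda (Suc m) z * poly (p mod ?H) z = gh_lambda (Suc m) z * poly p z"
      by simp
  qed
  finally show ?thesis .
qed

lemma gauss_moment_eq_gauss_hermite:
  "k < 2 * Suc m \<Longrightarrow> (\<Sum>z\<in>hermite_zeros (Suc m). gh_lambda (Suc m) z * z ^ k) = gauss_moment k"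
  using gauss_functional_eq_gauss_hermite[of "monom 1 k" m]
  by (simp add: gauss_functional_monom degree_monom_eq poly_monom)

lemma gauss_moment_even: "gauss_moment (2 * j) = fact (2 * j) / (2 ^ j * fact j * 2 ^ j)"
proof -
  have "gauss_moment (2 * j) * (2 ^ j * fact j * 2 ^ j) = fact (2 * j)"
  proof (induction j)
    case (Suc j)
    have e: "2 * Suc j = Suc (Suc (2 * j))" by simp
    have f: "fact (Suc (Suc (2 * j))) = (real (2 * j) + 2) * (real (2 * j) + 1) * fact (2 * j)"
      by (simp add: algebra_simps)
    have "gauss_moment (2 * Suc j) * (2 ^ Suc j * fact (Suc j) * 2 ^ Suc j)
        = (real (2 * j) + 2) * (real (2 * j) + 1) * (gauss_moment (2 * j) * (2 ^ j * fact j * 2 ^ j))"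
      unfolding e gauss_moment.simps by (simp add: field_simps)
    then show ?case unfolding Suc e f by simp
  qed simp
  then show ?thesis by (simp add: field_simps)
qed

lemma gauss_moment_odd: "gauss_moment (Suc (2 * j)) = 0"
  by (induction j) auto

lemma has_bochner_integral_std_normal_moment:
  "has_bochner_integral lborel (\<lambda>y. std_normal_density y * y ^ k) (sqrt 2 ^ k * gauss_moment k)"
proof (cases "even k")
  case True
  then obtain j where k: "k = 2 * j" by (auto elim: evenE)
  have "sqrt 2 ^ (2 * j) = (2::real) ^ j" by (simp add: power_mult)
  then show ?thesis using std_normal_moment_even[of j] by (simp add: k gauss_moment_even)
next
  case False
  then obtain j where k: "k = Suc (2 * j)" by (auto elim: oddE)
  show ?thesis using std_normal_moment_odd[of j] unfolding k gauss_moment_odd by simp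
qed

lemma integral_std_normal_poly_eq_gauss_hermite:
  "(LINT y|lborel. std_normal_density y * (\<Sum>k<2 * Suc m. c k * y ^ k))
     = (\<Sum>z\<in>hermite_zeros (Suc m). gh_lambda (Suc m) z * (\<Sum>k<2 * Suc m. c k * (sqrt 2 * z) ^ k))"
proof -
  have "(LINT y|lborel. std_normal_density y * (\<Sum>k<2 * Suc m. c k * y ^ k))
      = (\<Sum>k<2 * Suc m. c k * (LINT y|lborel. std_normal_density y * y ^ k))"
    by (simp add: sum_distrib_left mult.left_commute integrable_std_normal_moment
        Bochner_Integration.integral_sum del: sum.lessThan_Suc)
  also have "\<dots> = (\<Sum>k<2 * Suc m. c k * (sqrt 2 ^ k * gauss_moment k))"
    by (simp add: has_bochner_integral_integral_eq[OF has_bochner_integral_std_normal_moment]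
        del: sum.lessThan_Suc)
  also have "\<dots> = (\<Sum>k<2 * Suc m. c k * (\<Sum>z\<in>hermite_zeros (Suc m). gh_lambda (Suc m) z * (sqrt 2 * z) ^ k))"
  proof (intro sum.cong refl)
    fix k assume "k \<in> {..<2 * Suc m}"
    have "(\<Sum>z\<in>hermite_zeros (Suc m). gh_lambda (Suc m) z * (sqrt 2 * z) ^ k)
        = sqrt 2 ^ k * (\<Sum>z\<in>hermite_zeros (Suc m). gh_lambda (Suc m) z * z ^ k)"
      by (simp add: power_mult_distrib sum_distrib_left mult_ac)
    also have "\<dots> = sqrt 2 ^ k * gauss_moment k"
      using \<open>k \<in> {..<2 * Suc m}\<close> gauss_moment_eq_gauss_hermite by simp
    finally show "c k * (sqrt 2 ^ k * gauss_moment k)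
        = c k * (\<Sum>z\<in>hermite_zeros (Suc m). gh_lambda (Suc m) z * (sqrt 2 * z) ^ k)"
      by simp
  qed
  also have "\<dots> = (\<Sum>z\<in>hermite_zeros (Suc m). gh_lambda (Suc m) z * (\<Sum>k<2 * Suc m. c k * (sqrt 2 * z) ^ k))"
    unfolding sum_distrib_left by (subst sum.swap) (simp add: mult_ac del: sum.lessThan_Suc)
  finally show ?thesis .
qed

section \<open>Taylor expansion along a line\<close>

lemma has_real_derivative_along_axis:
  fixes F :: "real^'d::finite \<Rightarrow> real"
  assumes "\<And>x. ((\<lambda>t. F (x + t *\<^sub>R axis i 1)) has_real_derivative D x) (at 0)"
  shows "((\<lambda>t. F (w + t *\<^sub>R axis i 1)) has_real_derivative D (w + t0 *\<^sub>R axis i 1)) (at t0)"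
proof -
  have "((\<lambda>t. F (w + (t + t0) *\<^sub>R axis i 1)) has_real_derivative D (w + t0 *\<^sub>R axis i 1)) (at 0)"
    using assms[of "w + t0 *\<^sub>R axis i 1"] by (simp add: algebra_simps scaleR_add_left)
  then show ?thesis
    using DERIV_shift[of "\<lambda>t. F (w + t *\<^sub>R axis i 1)" _ 0 t0] by simp
qed

lemma mean_value_along_axis:
  fixes F :: "real^'d::finite \<Rightarrow> real"
  assumes "\<And>x. ((\<lambda>t. F (x + t *\<^sub>R axis i 1)) has_real_derivative D x) (at 0)"
  shows "\<exists>\<xi>. 0 < \<xi> \<and> \<xi> < 1 \<and> F (w + a *\<^sub>R axis i 1) - F w = a * D (w + (\<xi> * a) *\<^sub>R axis i 1)"
proof -
  have "((\<lambda>l. F (w + (l * a) *\<^sub>R axis i 1)) has_real_derivative D (w + (l * a) *\<^sub>R axis i 1) * a) (at l)" for l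
  proof -
    have "((\<lambda>l. l * a) has_real_derivative a) (at l)"
      by (auto intro!: derivative_eq_intros)
    from DERIV_chain2[OF has_real_derivative_along_axis[OF assms, of w "l * a"] this] show ?thesis .
  qed
  then have "\<exists>\<xi>>0. \<xi> < 1 \<and> F (w + (1 * a) *\<^sub>R axis i 1) - F (w + (0 * a) *\<^sub>R axis i 1)
      = (1 - 0) * (D (w + (\<xi> * a) *\<^sub>R axis i 1) * a)"
    by (intro MVT2) auto
  then show ?thesis
    by (simp add: mult.commute)
qed

lemma tendsto_axis_difference_quotient:
  fixes F :: "real^'d::finite \<Rightarrow> real"
  assumes ax: "\<And>x. ((\<lambda>t. F (x + t *\<^sub>R axis i 1)) has_real_derivative D x) (at 0)"
    and cont: "continuous_on UNIV D"
  shows "((\<lambda>y. (F (q + y *\<^sub>R u + (y * c) *\<^sub>R axis i 1) - F (q + y *\<^sub>R u)) / y) \<longlongrightarrow> c * D q) (at 0)"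
proof -
  have "\<forall>y. \<exists>\<xi>. 0 < \<xi> \<and> \<xi> < 1 \<and> F (q + y *\<^sub>R u + (y * c) *\<^sub>R axis i 1) - F (q + y *\<^sub>R u)
      = (y * c) * D (q + y *\<^sub>R u + (\<xi> * (y * c)) *\<^sub>R axis i 1)"
    using mean_value_along_axis[OF ax] by blast
  from choice[OF this] obtain \<xi> where \<xi>: "\<And>y. 0 < \<xi> y \<and> \<xi> y < 1"
    and mvt: "\<And>y. F (q + y *\<^sub>R u + (y * c) *\<^sub>R axis i 1) - F (q + y *\<^sub>R u)
      = (y * c) * D (q + y *\<^sub>R u + (\<xi> y * (y * c)) *\<^sub>R axis i 1)"
    by blast
  define z where "z y = q + y *\<^sub>R u + (\<xi> y * (y * c)) *\<^sub>R axis i 1" for y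
  have bound: "norm (z y - q) \<le> \<bar>y\<bar> * (norm u + \<bar>c\<bar>)" for y
  proof -
    have "z y - q = y *\<^sub>R u + (\<xi> y * (y * c)) *\<^sub>R axis i 1"
      by (simp add: z_def)
    then have "norm (z y - q) \<le> norm (y *\<^sub>R u) + norm ((\<xi> y * (y * c)) *\<^sub>R (axis i 1 :: real^'d))"
      by (metis norm_triangle_ineq)
    also have "\<dots> = \<bar>y\<bar> * norm u + \<xi> y * (\<bar>y\<bar> * \<bar>c\<bar>)"
      using \<xi>[of y] by (simp add: abs_mult)
    also have "\<dots> \<le> \<bar>y\<bar> * (norm u + \<bar>c\<bar>)"
      using \<xi>[of y] mult_left_le_one_le[of "\<bar>y\<bar> * \<bar>c\<bar>" "\<xi> y"] by (simp add: algebra_simps)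
    finally show ?thesis .
  qed
  have "((\<lambda>y. \<bar>y\<bar> * (norm u + \<bar>c\<bar>)) \<longlongrightarrow> 0) (at 0)"
    by (intro tendsto_mult_left_zero tendsto_rabs_zero tendsto_ident_at)
  then have "((\<lambda>y. z y - q) \<longlongrightarrow> 0) (at 0)"
    by (rule Lim_null_comparison[OF always_eventually[OF allI[OF bound]]])
  then have "(z \<longlongrightarrow> q) (at 0)"
    by (simp add: LIM_zero_iff)
  moreover have "isCont D q"
    using cont by (simp add: continuous_on_eq_continuous_at)
  ultimately have "((\<lambda>y. c * D (z y)) \<longlongrightarrow> c * D q) (at 0)"
    by (intro tendsto_mult_left isCont_tendsto_compose[of q D])
  moreover have "\<forall>\<^sub>F y in at 0. c * D (z y) = (F (q + y *\<^sub>R u + (y * c) *\<^sub>R axis i 1) - F (q + y *\<^sub>R u)) / y"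
    by (simp add: eventually_at_filter mvt z_def)
  ultimately show ?thesis
    by (rule Lim_transform_eventually)
qed

text \<open>Continuous partial derivatives give the chain rule along any line; adding one
  coordinate direction at a time reduces it to the one-dimensional mean value theorem.\<close>
lemma has_real_derivative_along_coordinate_sum:
  fixes F :: "real^'d::finite \<Rightarrow> real"
  assumes ax: "\<And>i x. ((\<lambda>t. F (x + t *\<^sub>R axis i 1)) has_real_derivative D i x) (at 0)"
    and cont: "\<And>i. continuous_on UNIV (D i)"
    and "finite I"
  shows "((\<lambda>t. F (q + t *\<^sub>R (\<Sum>i\<in>I. v$i *\<^sub>R axis i 1))) has_real_derivative (\<Sum>i\<in>I. v$i * D i q)) (at 0)"
  using \<open>finite I\<close>
proof (induction I arbitrary: q rule: finite_induct)
  case (insert j I)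
  let ?u = "\<Sum>i\<in>I. v$i *\<^sub>R axis i 1"
  have line: "q + y *\<^sub>R (\<Sum>i\<in>insert j I. v$i *\<^sub>R axis i 1) = q + y *\<^sub>R ?u + (y * v$j) *\<^sub>R axis j 1" for y
    using insert.hyps by (simp add: algebra_simps)
  have split: "(F (q + y *\<^sub>R (\<Sum>i\<in>insert j I. v$i *\<^sub>R axis i 1)) - F q) / y
      = (F (q + y *\<^sub>R ?u + (y * v$j) *\<^sub>R axis j 1) - F (q + y *\<^sub>R ?u)) / y + (F (q + y *\<^sub>R ?u) - F q) / y" for y
    by (simp only: line diff_divide_distrib)
  have "((\<lambda>y. (F (q + y *\<^sub>R ?u) - F q) / y) \<longlongrightarrow> (\<Sum>i\<in>I. v$i * D i q)) (at 0)"
    using insert.IH[of q] by (simp add: has_field_derivative_iff)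
  with tendsto_axis_difference_quotient[OF ax cont, where i = j and q = q and u = ?u and c = "v$j"]
  have "((\<lambda>y. (F (q + y *\<^sub>R (\<Sum>i\<in>insert j I. v$i *\<^sub>R axis i 1)) - F q) / y)
      \<longlongrightarrow> v$j * D j q + (\<Sum>i\<in>I. v$i * D i q)) (at 0)"
    unfolding split by (rule tendsto_add)
  then show ?case
    using insert.hyps by (simp add: has_field_derivative_iff)
qed simp

lemma has_real_derivative_along_line:
  fixes F :: "real^'d::finite \<Rightarrow> real"
  assumes "\<And>i x. ((\<lambda>t. F (x + t *\<^sub>R axis i 1)) has_real_derivative D i x) (at 0)"
    and "\<And>i. continuous_on UNIV (D i)"
  shows "((\<lambda>t. F (p + t *\<^sub>R v)) has_real_derivative (\<Sum>i\<in>UNIV. v$i * D i (p + s *\<^sub>R v))) (at s)"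
proof -
  have "(\<Sum>i\<in>UNIV. v$i *\<^sub>R axis i 1) = v"
    using basis_expansion[of v] by (simp add: scalar_mult_eq_scaleR)
  then have "((\<lambda>t. F ((p + s *\<^sub>R v) + t *\<^sub>R v)) has_real_derivative (\<Sum>i\<in>UNIV. v$i * D i (p + s *\<^sub>R v))) (at 0)"
    using has_real_derivative_along_coordinate_sum[OF assms, of UNIV "p + s *\<^sub>R v" v] by simp
  then have "((\<lambda>t. F (p + (t + s) *\<^sub>R v)) has_real_derivative (\<Sum>i\<in>UNIV. v$i * D i (p + s *\<^sub>R v))) (at 0)"
    by (simp add: algebra_simps)
  then show ?thesis
    using DERIV_shift[of "\<lambda>t. F (p + t *\<^sub>R v)" _ 0 s] by simp
qed

lemma Ck_has_real_derivative_partial: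
  assumes "Ck k f" "length is < k"
  shows "((\<lambda>t. iter_partial is f (x + t *\<^sub>R axis i 1)) has_real_derivative iter_partial (i # is) f x) (at 0)"
proof -
  have "(\<lambda>t. iter_partial is f (x + t *\<^sub>R axis i 1)) differentiable (at 0)"
    using assms unfolding Ck_def by blast
  then show ?thesis
    by (simp add: partial_dir_def DERIV_deriv_iff_real_differentiable)
qed

lemma Ck_continuous_partial: "Ck k f \<Longrightarrow> length is \<le> k \<Longrightarrow> continuous_on UNIV (iter_partial is f)"
  unfolding Ck_def by blast

lemma abs_iter_partial_le_Dk_sup:
  "bdd_above (Dk_vals k f) \<Longrightarrow> length is = k \<Longrightarrow> \<bar>iter_partial is f z\<bar> \<le> Dk_sup k f"
  unfolding Dk_sup_def by (rule cSup_upper) (auto simp: Dk_vals_def)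

lemma Dk_sup_nonneg:
  fixes f :: "real^'d::finite \<Rightarrow> real"
  shows "bdd_above (Dk_vals k f) \<Longrightarrow> 0 \<le> Dk_sup k f"
  using abs_iter_partial_le_Dk_sup[of k f "replicate k undefined" 0] by simp

definition deriv_along_line ::
  "(real^'d::finite \<Rightarrow> real) \<Rightarrow> real^'d \<Rightarrow> real^'d \<Rightarrow> nat \<Rightarrow> real \<Rightarrow> real" where
  "deriv_along_line f p v k s =
     (\<Sum>is\<in>{is. length is = k}. prod_list (map (\<lambda>i. v$i) is) * iter_partial is f (p + s *\<^sub>R v))"

lemma deriv_along_line_0 [simp]: "deriv_along_line f p v 0 s = f (p + s *\<^sub>R v)"
  by (simp add: deriv_along_line_def)

lemma deriv_along_line_Suc:
  fixes f :: "real^'d::finite \<Rightarrow> real"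
  shows "deriv_along_line f p v (Suc k) s =
    (\<Sum>is\<in>{is. length is = k}. prod_list (map (\<lambda>i. v$i) is) *
       (\<Sum>i\<in>UNIV. v$i * iter_partial (i # is) f (p + s *\<^sub>R v)))"
proof -
  have lists: "{is :: 'd list. length is = Suc k} = (\<lambda>(is, i). i # is) ` ({is. length is = k} \<times> UNIV)"
    using lists_length_Suc_eq[of UNIV k] by simp
  have "inj_on (\<lambda>(is, i). i # is) ({is :: 'd list. length is = k} \<times> UNIV)"
    by (auto simp: inj_on_def)
  then have "deriv_along_line f p v (Suc k) s = (\<Sum>(is, i)\<in>{is. length is = k} \<times> UNIV.
      prod_list (map (\<lambda>i. v$i) (i # is)) * iter_partial (i # is) f (p + s *\<^sub>R v))"
    unfolding deriv_along_line_def lists by (simp add: sum.reindex case_prod_unfold)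
  also have "\<dots> = (\<Sum>is\<in>{is. length is = k}. \<Sum>i\<in>UNIV.
      prod_list (map (\<lambda>i. v$i) (i # is)) * iter_partial (i # is) f (p + s *\<^sub>R v))"
    by (rule sum.cartesian_product[symmetric])
  finally show ?thesis
    by (simp add: sum_distrib_left algebra_simps)
qed

lemma has_real_derivative_deriv_along_line:
  fixes f :: "real^'d::finite \<Rightarrow> real"
  assumes "Ck n f" "k < n"
  shows "(deriv_along_line f p v k has_real_derivative deriv_along_line f p v (Suc k) s) (at s)"
  unfolding deriv_along_line_Suc unfolding deriv_along_line_def[abs_def]
proof (intro DERIV_sum DERIV_cmult)
  fix "is" :: "'d list" assume "is \<in> {is. length is = k}"
  then show "((\<lambda>s. iter_partial is f (p + s *\<^sub>R v)) has_real_derivative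
      (\<Sum>i\<in>UNIV. v$i * iter_partial (i # is) f (p + s *\<^sub>R v))) (at s)"
    using assms
    by (intro has_real_derivative_along_line Ck_has_real_derivative_partial Ck_continuous_partial) auto
qed

lemma abs_prod_list_components_le: "\<bar>prod_list (map (\<lambda>i. v$i) is)\<bar> \<le> norm v ^ length is"
  for v :: "real^'d::finite"
  by (induction "is") (auto simp: abs_mult intro!: mult_mono component_le_norm_cart)

lemma abs_deriv_along_line_le:
  fixes f :: "real^'d::finite \<Rightarrow> real"
  assumes "bdd_above (Dk_vals k f)"
  shows "\<bar>deriv_along_line f p v k s\<bar> \<le> real CARD('d) ^ k * norm v ^ k * Dk_sup k f"
proof -
  have card: "card {is :: 'd list. length is = k} = CARD('d) ^ k"
    using card_lists_length_eq[of "UNIV :: 'd set" k] by simp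
  have "\<bar>deriv_along_line f p v k s\<bar>
      \<le> (\<Sum>is\<in>{is :: 'd list. length is = k}. \<bar>prod_list (map (\<lambda>i. v$i) is) * iter_partial is f (p + s *\<^sub>R v)\<bar>)"
    unfolding deriv_along_line_def by (rule sum_abs)
  also have "\<dots> \<le> real (card {is :: 'd list. length is = k}) * (norm v ^ k * Dk_sup k f)"
    using abs_prod_list_components_le[of v] abs_iter_partial_le_Dk_sup[OF assms]
    by (intro sum_bounded_above) (auto simp: abs_mult intro!: mult_mono)
  finally show ?thesis
    by (simp add: card)
qed

lemma abs_taylor_remainder_along_line_le:
  fixes f :: "real^'d::finite \<Rightarrow> real"
  assumes "Ck n f" "bdd_above (Dk_vals n f)"
  shows "\<bar>f (p + s *\<^sub>R v) - (\<Sum>k<n. deriv_along_line f p v k 0 / fact k * s ^ k)\<bar>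
           \<le> real CARD('d) ^ n * norm v ^ n * Dk_sup n f / fact n * \<bar>s\<bar> ^ n"
proof -
  obtain t where "f (p + s *\<^sub>R v) = (\<Sum>k<n. deriv_along_line f p v k 0 / fact k * s ^ k)
      + deriv_along_line f p v n t / fact n * s ^ n"
    using Maclaurin_bi_le[of "deriv_along_line f p v" "\<lambda>s. f (p + s *\<^sub>R v)" n s]
      has_real_derivative_deriv_along_line[OF assms(1)] by fastforce
  moreover have "\<bar>deriv_along_line f p v n t / fact n * s ^ n\<bar>
      \<le> real CARD('d) ^ n * norm v ^ n * Dk_sup n f / fact n * \<bar>s\<bar> ^ n"
    using abs_deriv_along_line_le[OF assms(2), of p v t]
    by (simp add: abs_mult power_abs divide_right_mono mult_right_mono)
  ultimately show ?thesis by simp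
qed

section \<open>The one-step error\<close>

lemma gh_lambda_nonneg: "0 \<le> gh_lambda M z"
  by (simp add: gh_lambda_def gh_omega_def)

text \<open>The sum of the moments of order \<open>2 M\<close> of a standard normal \<open>Y\<close> and of the
  Gauss--Hermite variable \<open>\<zeta>\<close>.\<close>
definition gauss_hermite_error_const :: "nat \<Rightarrow> real" where
  "gauss_hermite_error_const M =
     fact (2 * M) / (2 ^ M * fact M) + (\<Sum>z\<in>hermite_zeros M. gh_lambda M z * (sqrt 2 * z) ^ (2 * M))"

lemma gauss_hermite_error_const_nonneg: "0 \<le> gauss_hermite_error_const M"
  unfolding gauss_hermite_error_const_def
  by (intro add_nonneg_nonneg sum_nonneg mult_nonneg_nonneg gh_lambda_nonneg) (simp_all add: power_mult)

lemma std_normal_remainder_bound: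
  fixes R :: "real \<Rightarrow> real"
  assumes cont: "continuous_on UNIV R" and "0 \<le> h" "0 \<le> K"
    and R: "\<And>s. \<bar>R s\<bar> \<le> K * \<bar>s\<bar> ^ (2 * M)"
  shows "integrable lborel (\<lambda>y. std_normal_density y * R (sqrt h * y))"
    and "\<bar>LINT y|lborel. std_normal_density y * R (sqrt h * y)\<bar> \<le> K * h ^ M * (fact (2 * M) / (2 ^ M * fact M))"
proof -
  have bound: "\<bar>std_normal_density y * R (sqrt h * y)\<bar> \<le> K * h ^ M * (std_normal_density y * y ^ (2 * M))" for y
  proof -
    have "\<bar>sqrt h * y\<bar> ^ (2 * M) = h ^ M * y ^ (2 * M)"
      using \<open>0 \<le> h\<close> by (simp add: power_mult_distrib power_mult power_abs abs_mult)
    then show ?thesis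
      using R[of "sqrt h * y"] mult_left_mono[OF R[of "sqrt h * y"], of "std_normal_density y"]
      by (simp add: abs_mult mult_ac)
  qed
  have majorant_nonneg: "0 \<le> K * h ^ M * (std_normal_density y * y ^ (2 * M))" for y
    using \<open>0 \<le> h\<close> \<open>0 \<le> K\<close> by (simp add: power_mult)
  have integrable_majorant: "integrable lborel (\<lambda>y. K * h ^ M * (std_normal_density y * y ^ (2 * M)))"
    using integrable_std_normal_moment by simp
  have "continuous_on UNIV (\<lambda>y. R (sqrt h * y))"
    by (rule continuous_on_compose2[OF cont]) (auto intro!: continuous_intros)
  then have "(\<lambda>y. std_normal_density y * R (sqrt h * y)) \<in> borel_measurable lborel"
    unfolding measurable_lborel2
    by (intro borel_measurable_times borel_measurable_normal_density borel_measurable_continuous_onI)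
  then show int: "integrable lborel (\<lambda>y. std_normal_density y * R (sqrt h * y))"
    using bound majorant_nonneg by (intro Bochner_Integration.integrable_bound[OF integrable_majorant]) auto
  have "\<bar>LINT y|lborel. std_normal_density y * R (sqrt h * y)\<bar>
      \<le> (LINT y|lborel. \<bar>std_normal_density y * R (sqrt h * y)\<bar>)"
    using integral_norm_bound[of lborel "\<lambda>y. std_normal_density y * R (sqrt h * y)"] by simp
  also have "\<dots> \<le> (LINT y|lborel. K * h ^ M * (std_normal_density y * y ^ (2 * M)))"
    using int integrable_majorant bound by (intro Bochner_Integration.integral_mono) auto
  also have "\<dots> = K * h ^ M * (fact (2 * M) / (2 ^ M * fact M))"
    by (simp add: integral_std_normal_moment_even)
  finally show "\<bar>LINT y|lborel. std_normal_density y * R (sqrt h * y)\<bar> \<le> K * h ^ M * (fact (2 * M) / (2 ^ M * fact M))" .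
qed

lemma gauss_hermite_remainder_bound:
  assumes "0 \<le> h" and R: "\<And>s. \<bar>R s\<bar> \<le> K * \<bar>s\<bar> ^ (2 * M)"
  shows "\<bar>\<Sum>z\<in>hermite_zeros M. gh_lambda M z * R (sqrt h * (sqrt 2 * z))\<bar>
           \<le> K * h ^ M * (\<Sum>z\<in>hermite_zeros M. gh_lambda M z * (sqrt 2 * z) ^ (2 * M))"
proof -
  have "\<bar>\<Sum>z\<in>hermite_zeros M. gh_lambda M z * R (sqrt h * (sqrt 2 * z))\<bar>
      \<le> (\<Sum>z\<in>hermite_zeros M. gh_lambda M z * \<bar>R (sqrt h * (sqrt 2 * z))\<bar>)"
    by (rule order.trans[OF sum_abs]) (simp add: abs_mult gh_lambda_nonneg)
  also have "\<dots> \<le> (\<Sum>z\<in>hermite_zeros M. gh_lambda M z * (K * (h ^ M * (sqrt 2 * z) ^ (2 * M))))"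
  proof (intro sum_mono mult_left_mono gh_lambda_nonneg)
    fix z
    have "\<bar>sqrt h * (sqrt 2 * z)\<bar> ^ (2 * M) = h ^ M * (sqrt 2 * z) ^ (2 * M)"
      using \<open>0 \<le> h\<close> by (simp add: power_mult_distrib power_mult power_abs abs_mult)
    then show "\<bar>R (sqrt h * (sqrt 2 * z))\<bar> \<le> K * (h ^ M * (sqrt 2 * z) ^ (2 * M))"
      using R[of "sqrt h * (sqrt 2 * z)"] by simp
  qed
  finally show ?thesis
    by (simp add: sum_distrib_left mult_ac)
qed

lemma gauss_hermite_error_bound:
  fixes g :: "real \<Rightarrow> real"
  assumes cont: "continuous_on UNIV g" and "0 \<le> h" "0 \<le> K"
    and taylor: "\<And>s. \<bar>g s - (\<Sum>k<2 * Suc m. c k * s ^ k)\<bar> \<le> K * \<bar>s\<bar> ^ (2 * Suc m)"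
  shows "\<bar>(LINT y|lborel. std_normal_density y * g (sqrt h * y))
           - (\<Sum>z\<in>hermite_zeros (Suc m). gh_lambda (Suc m) z * g (sqrt h * (sqrt 2 * z)))\<bar>
         \<le> K * h ^ Suc m * gauss_hermite_error_const (Suc m)"
proof -
  define P where "P s = (\<Sum>k<2 * Suc m. c k * s ^ k)" for s
  define R where "R s = g s - P s" for s
  have P_scaled: "P (sqrt h * y) = (\<Sum>k<2 * Suc m. (c k * sqrt h ^ k) * y ^ k)" for y
    by (simp add: P_def power_mult_distrib mult_ac)
  have "continuous_on UNIV R"
    unfolding R_def P_def by (intro continuous_intros cont)
  note R_bounds = std_normal_remainder_bound[OF this \<open>0 \<le> h\<close> \<open>0 \<le> K\<close>, of "Suc m"]
  have "std_normal_density y * P (sqrt h * y) = (\<Sum>k<2 * Suc m. (c k * sqrt h ^ k) * (std_normal_density y * y ^ k))" for y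
    unfolding P_scaled by (simp add: sum_distrib_left mult_ac del: sum.lessThan_Suc)
  moreover have "integrable lborel (\<lambda>y. \<Sum>k<2 * Suc m. (c k * sqrt h ^ k) * (std_normal_density y * y ^ k))"
    by (intro Bochner_Integration.integrable_sum integrable_mult_right integrable_std_normal_moment)
  ultimately have "integrable lborel (\<lambda>y. std_normal_density y * P (sqrt h * y))"
    by simp
  then have "(LINT y|lborel. std_normal_density y * g (sqrt h * y))
      = (LINT y|lborel. std_normal_density y * P (sqrt h * y)) + (LINT y|lborel. std_normal_density y * R (sqrt h * y))"
    using R_bounds(1) taylor by (simp add: R_def P_def algebra_simps flip: Bochner_Integration.integral_add)
  moreover have "(\<Sum>z\<in>hermite_zeros (Suc m). gh_lambda (Suc m) z * g (sqrt h * (sqrt 2 * z)))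
      = (\<Sum>z\<in>hermite_zeros (Suc m). gh_lambda (Suc m) z * P (sqrt h * (sqrt 2 * z)))
        + (\<Sum>z\<in>hermite_zeros (Suc m). gh_lambda (Suc m) z * R (sqrt h * (sqrt 2 * z)))"
    by (simp add: R_def right_diff_distrib sum_subtractf)
  moreover have "(LINT y|lborel. std_normal_density y * P (sqrt h * y))
      = (\<Sum>z\<in>hermite_zeros (Suc m). gh_lambda (Suc m) z * P (sqrt h * (sqrt 2 * z)))"
    unfolding P_scaled by (rule integral_std_normal_poly_eq_gauss_hermite)
  ultimately have "\<bar>(LINT y|lborel. std_normal_density y * g (sqrt h * y))
      - (\<Sum>z\<in>hermite_zeros (Suc m). gh_lambda (Suc m) z * g (sqrt h * (sqrt 2 * z)))\<bar>
      \<le> \<bar>LINT y|lborel. std_normal_density y * R (sqrt h * y)\<bar>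
        + \<bar>\<Sum>z\<in>hermite_zeros (Suc m). gh_lambda (Suc m) z * R (sqrt h * (sqrt 2 * z))\<bar>"
    by linarith
  also have "\<dots> \<le> K * h ^ Suc m * gauss_hermite_error_const (Suc m)"
    using R_bounds(2) gauss_hermite_remainder_bound[OF \<open>0 \<le> h\<close>, of R K "Suc m"] taylor
    by (simp add: R_def P_def gauss_hermite_error_const_def algebra_simps)
  finally show ?thesis .
qed

lemma gauss_hermite_error_along_line:
  fixes f :: "real^'d::finite \<Rightarrow> real"
  assumes "Ck (2 * Suc m) f" "bdd_above (Dk_vals (2 * Suc m) f)" "0 \<le> h"
  shows "\<bar>(LINT y|lborel. std_normal_density y * f (p + (sqrt h * y) *\<^sub>R v))
           - (\<Sum>z\<in>hermite_zeros (Suc m). gh_lambda (Suc m) z * f (p + (sqrt h * (sqrt 2 * z)) *\<^sub>R v))\<bar>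
         \<le> real CARD('d) ^ (2 * Suc m) * norm v ^ (2 * Suc m) * Dk_sup (2 * Suc m) f / fact (2 * Suc m)
            * h ^ Suc m * gauss_hermite_error_const (Suc m)"
proof (rule gauss_hermite_error_bound[where g = "\<lambda>s. f (p + s *\<^sub>R v)"
      and c = "\<lambda>k. deriv_along_line f p v k 0 / fact k"])
  have "continuous_on UNIV f"
    using Ck_continuous_partial[OF assms(1), of "[]"] by simp
  then show "continuous_on UNIV (\<lambda>s. f (p + s *\<^sub>R v))"
    by (rule continuous_on_compose2) (auto intro!: continuous_intros)
  show "0 \<le> real CARD('d) ^ (2 * Suc m) * norm v ^ (2 * Suc m) * Dk_sup (2 * Suc m) f / fact (2 * Suc m)"
    using Dk_sup_nonneg[OF assms(2)] by simp
  show "\<bar>f (p + s *\<^sub>R v) - (\<Sum>k<2 * Suc m. deriv_along_line f p v k 0 / fact k * s ^ k)\<bar>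
      \<le> real CARD('d) ^ (2 * Suc m) * norm v ^ (2 * Suc m) * Dk_sup (2 * Suc m) f / fact (2 * Suc m)
         * \<bar>s\<bar> ^ (2 * Suc m)" for s
    by (rule abs_taylor_remainder_along_line_le[OF assms(1,2)])
qed (rule assms(3))

lemma linear_growth_on_compact:
  fixes \<sigma> :: "real \<Rightarrow> 'x::real_normed_vector \<Rightarrow> 'a::topological_space \<Rightarrow> 'b::real_normed_vector"
  assumes "compact A" "0 \<le> T" "0 \<le> C0"
    and cont: "continuous_on ({0..T} \<times> UNIV \<times> A) (\<lambda>(t, x, a). \<sigma> t x a)"
    and lip: "\<And>t s x y a. t \<in> {0..T} \<Longrightarrow> s \<in> {0..T} \<Longrightarrow> a \<in> A \<Longrightarrow>
               norm (\<sigma> t x a - \<sigma> s y a) \<le> C0 * (norm (x - y) + sqrt \<bar>t - s\<bar>)"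
  shows "\<exists>L\<ge>0. \<forall>t\<in>{0..T}. \<forall>x. \<forall>a\<in>A. norm (\<sigma> t x a) \<le> L * (1 + norm x)"
proof -
  have "continuous_on A (\<lambda>a. (\<lambda>(t, x, a). \<sigma> t x a) (0, 0, a))"
    by (rule continuous_on_compose2[OF cont]) (use \<open>0 \<le> T\<close> in \<open>auto intro!: continuous_intros\<close>)
  then have "continuous_on A (\<lambda>a. \<sigma> 0 0 a)"
    by simp
  then have "bounded ((\<lambda>a. \<sigma> 0 0 a) ` A)"
    using \<open>compact A\<close> by (intro compact_imp_bounded compact_continuous_image)
  then obtain S where S: "0 \<le> S" "\<And>a. a \<in> A \<Longrightarrow> norm (\<sigma> 0 0 a) \<le> S"
    by (metis bounded_pos image_eqI less_eq_real_def)
  have "norm (\<sigma> t x a) \<le> (S + C0 * sqrt T + C0) * (1 + norm x)" if "t \<in> {0..T}" "a \<in> A" for t x a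
  proof -
    have "norm (\<sigma> t x a - \<sigma> 0 0 a) \<le> C0 * (norm x + sqrt t)"
      using lip[OF that(1) _ that(2), of 0 x 0] that(1) \<open>0 \<le> T\<close> by simp
    then have "norm (\<sigma> t x a) \<le> S + C0 * (norm x + sqrt T)"
      using norm_triangle_sub[of "\<sigma> t x a" "\<sigma> 0 0 a"] S(2)[OF that(2)] that(1)
        mult_left_mono[of "sqrt t" "sqrt T" C0] \<open>0 \<le> C0\<close> by (auto simp: algebra_simps)
    also have "\<dots> \<le> (S + C0 * sqrt T + C0) * (1 + norm x)"
      using S(1) \<open>0 \<le> C0\<close> \<open>0 \<le> T\<close> by (simp add: algebra_simps)
    finally show ?thesis .
  qed
  moreover have "0 \<le> S + C0 * sqrt T + C0"
    using S(1) \<open>0 \<le> C0\<close> \<open>0 \<le> T\<close> by simp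
  ultimately show ?thesis by blast
qed

lemma power_le_of_linear_growth:
  fixes u r L :: real
  assumes "0 \<le> u" "u \<le> L * (1 + r)" "0 \<le> r"
  shows "u ^ k \<le> (2 * L) ^ k * (1 + r ^ k)"
proof -
  have "0 \<le> L * (1 + r)"
    using assms(1,2) by linarith
  then have "0 \<le> L"
    using \<open>0 \<le> r\<close> by (simp add: zero_le_mult_iff)
  have "L * (1 + r) \<le> L * (2 * max 1 r)"
    using \<open>0 \<le> L\<close> by (intro mult_left_mono) auto
  then have "u ^ k \<le> ((2 * L) * max 1 r) ^ k"
    using assms(1,2) by (intro power_mono) (simp_all add: mult_ac)
  also have "\<dots> = (2 * L) ^ k * max 1 r ^ k"
    by (simp only: power_mult_distrib)
  also have "\<dots> \<le> (2 * L) ^ k * (1 + r ^ k)"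
    using \<open>0 \<le> r\<close> \<open>0 \<le> L\<close> by (intro mult_left_mono) (auto simp: max_def)
  finally show ?thesis .
qed

lemma EM_expect_GH_expect_diff_le:
  fixes f :: "real^'d::finite \<Rightarrow> real"
  assumes f: "Ck (2 * M) f" "bdd_above (Dk_vals (2 * M) f)" and "0 \<le> h" "1 \<le> M"
    and growth: "norm (\<sigma> t x a) \<le> L * (1 + norm x)"
  shows "\<bar>EM_expect \<mu> \<sigma> f h t x a - GH_expect M \<mu> \<sigma> f h t x a\<bar>
    \<le> real CARD('d) ^ (2 * M) / fact (2 * M) * gauss_hermite_error_const M * (2 * L) ^ (2 * M)
       * Dk_sup (2 * M) f * (1 + norm x ^ (2 * M)) * h ^ M"
proof -
  obtain m where M: "M = Suc m" using \<open>1 \<le> M\<close> by (cases M) auto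
  let ?c = "real CARD('d) ^ (2 * M) * Dk_sup (2 * M) f / fact (2 * M) * gauss_hermite_error_const M"
  have "0 \<le> ?c"
    using Dk_sup_nonneg[OF f(2)] gauss_hermite_error_const_nonneg[of M] by simp
  have "\<bar>EM_expect \<mu> \<sigma> f h t x a - GH_expect M \<mu> \<sigma> f h t x a\<bar> \<le> ?c * norm (\<sigma> t x a) ^ (2 * M) * h ^ M"
    using gauss_hermite_error_along_line[OF f[unfolded M] \<open>0 \<le> h\<close>, of "x + h *\<^sub>R \<mu> t x a" "\<sigma> t x a"]
    by (simp add: EM_expect_def GH_expect_def M mult_ac)
  also have "\<dots> \<le> ?c * ((2 * L) ^ (2 * M) * (1 + norm x ^ (2 * M))) * h ^ M"
    using growth \<open>0 \<le> ?c\<close> \<open>0 \<le> h\<close>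
    by (intro mult_right_mono mult_left_mono power_le_of_linear_growth) simp_all
  finally show ?thesis
    by (simp add: mult_ac)
qed

theorem proposition3p2:
  fixes T C0 :: real and M :: nat
    and A :: "(real^'q) set"
    and \<mu> \<sigma> :: "real \<Rightarrow> real^'d \<Rightarrow> real^'q \<Rightarrow> real^'d"
  assumes T_pos: "T > 0"
    and A_compact: "compact A"
    and C0_nonneg: "C0 \<ge> 0"
    and mu_cont: "continuous_on ({0..T} \<times> UNIV \<times> A) (\<lambda>(t, x, a). \<mu> t x a)"
    and sigma_cont: "continuous_on ({0..T} \<times> UNIV \<times> A) (\<lambda>(t, x, a). \<sigma> t x a)"
    and lip: "\<And>t s x y a. t \<in> {0..T} \<Longrightarrow> s \<in> {0..T} \<Longrightarrow> a \<in> A \<Longrightarrow>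
               norm (\<mu> t x a - \<mu> s y a) + norm (\<sigma> t x a - \<sigma> s y a)
                 \<le> C0 * (norm (x - y) + sqrt \<bar>t - s\<bar>)"
    and M_ge: "M \<ge> 2"
  shows "\<exists>Chat \<ge> 0. \<forall>f :: real^'d \<Rightarrow> real. Ck (2 * M) f \<longrightarrow> bdd_above (Dk_vals (2 * M) f) \<longrightarrow>
           (\<forall>N :: nat. N \<ge> 1 \<longrightarrow> (\<forall>n < N. \<forall>x. \<forall>a \<in> A.
              (let h = T / real N; t = real n * h in
                \<bar>EM_expect \<mu> \<sigma> f h t x a - GH_expect M \<mu> \<sigma> f h t x a\<bar>
                  \<le> Chat * Dk_sup (2 * M) f * (1 + norm x ^ (2 * M)) * h ^ M)))"
proof -
  have "norm (\<sigma> t x a - \<sigma> s y a) \<le> C0 * (norm (x - y) + sqrt \<bar>t - s\<bar>)"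
    if "t \<in> {0..T}" "s \<in> {0..T}" "a \<in> A" for t s x y a
    using lip[OF that, of x y] norm_ge_zero[of "\<mu> t x a - \<mu> s y a"] by linarith
  then obtain L where "0 \<le> L"
    and growth: "\<And>t x a. t \<in> {0..T} \<Longrightarrow> a \<in> A \<Longrightarrow> norm (\<sigma> t x a) \<le> L * (1 + norm x)"
    using linear_growth_on_compact[OF A_compact _ C0_nonneg sigma_cont] T_pos by fastforce
  define Chat where
    "Chat = real CARD('d) ^ (2 * M) / fact (2 * M) * gauss_hermite_error_const M * (2 * L) ^ (2 * M)"
  show ?thesis
  proof (intro exI[of _ Chat] conjI allI impI ballI)
    show "0 \<le> Chat"
      using \<open>0 \<le> L\<close> gauss_hermite_error_const_nonneg by (simp add: Chat_def)
    fix f :: "real^'d \<Rightarrow> real" and N n :: nat and x a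
    assume f: "Ck (2 * M) f" "bdd_above (Dk_vals (2 * M) f)" and "n < N" "a \<in> A"
    have h: "0 \<le> T / real N" and t: "real n * (T / real N) \<in> {0..T}"
      using T_pos \<open>n < N\<close> by (auto simp: field_simps)
    show "let h = T / real N; t = real n * h in
        \<bar>EM_expect \<mu> \<sigma> f h t x a - GH_expect M \<mu> \<sigma> f h t x a\<bar>
          \<le> Chat * Dk_sup (2 * M) f * (1 + norm x ^ (2 * M)) * h ^ M"
      using EM_expect_GH_expect_diff_le[where \<sigma> = \<sigma>, OF f h _ growth[OF t \<open>a \<in> A\<close>, of x]] M_ge
      by (simp add: Chat_def Let_def)
  qed
qed

end
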